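(* For every CCCP configuration $\mathcal C=\Gamma\triangleright W$: if $\mathcal C\xrightarrow{\sigma}W_1$ and $\mathcal C\xrightarrow{\sigma}W_2$, then $W_1=W_2$.
   Context: CCCP syntax. Fix a set of channels (ranged over by $c,d$) and a set of values containing data variables $x,y$ and a special error value $\mathtt{err}$; closed values $v,w$ contain no variables, and each closed value $v$ has a transmission time $\delta_v\in\mathbb{N}$ with $\delta_v\ge 1$. Expressions $e$ are built from values; closed expressions evaluate to closed values via $[\![e]\!]$. Station code (processes) is given by $P,Q ::= c!\langle e\rangle.P \mid \lfloor ?c(x).P\rfloor Q \mid \sigma.P \mid \tau.P \mid P+Q \mid [b]P,Q \mid X \mid \mathbf{0} \mid \mathrm{fix}\,X.P$, where $b$ is either $e_1=e_2$ or $\mathrm{exp}(c)$, $[b]P,Q$ is a conditional (then-branch $P$, else-branch $Q$), $\lfloor ?c(x).P\rfloor Q$ is a receiver on $c$ with timeout branch $Q$ ($x$ bound in $P$), $\sigma.P$ is a one-unit delay and $\sigma^n.P$ denotes $n$ nested delays. System terms are $W ::= P \mid \lfloor ?c(x).P\rfloor \mid W_1|W_2 \mid \nu c{:}(n,v).W$, where $\lfloor ?c(x).P\rfloor$ is an active receiver ($x$ bound in $P$) and $\nu c{:}(n,v).W$ restricts $c$ with local channel state $(n,v)$. In $\mathrm{fix}\,X.P$ every occurrence of $X$ in $P$ is guarded, i.e. lies within a broadcast prefix, a receiver continuation, a timeout branch, a $\sigma$-prefix, or a branch of a conditional. Terms are identified up to $\alpha$-conversion. A channel environment is a map $\Gamma$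 from channels to $\mathbb{N}\times$(closed values); write $\Gamma\vdash_t c:n$ and $\Gamma\vdash_v c:w$ when $\Gamma(c)=(n,w)$; $c$ is idle in $\Gamma$ if $\Gamma\vdash_t c:0$ and exposed otherwise; $\Gamma[c\mapsto(n,v)]$ is $\Gamma$ updated at $c$; $\Gamma\le\Gamma'$ iff for every $c$, $\Gamma\vdash_t c:n$ and $\Gamma'\vdash_t c:m$ imply $n\le m$. A configuration $\Gamma\triangleright W$ is a channel environment together with a closed system term (no free data or process variables). Intensional semantics. Actions $\lambda$ are $c!v$, $c?v$, $\sigma$, $\tau$. The environment update $\lambda(\Gamma)$ is: $\sigma(\Gamma)(c)=(\max(n-1,0),w)$ whenever $\Gamma(c)=(n,w)$; $c!v(\Gamma)$ agrees with $\Gamma$ except at $c$, where it is $(\delta_v,v)$ if $c$ is idle in $\Gamma$ and $(\max(\delta_v,n),\mathtt{err})$ if $\Gamma\vdash_t c:n>0$; $c?v(\Gamma)=c!v(\Gamma)$; $\tau(\Gamma)=\Gamma$. The predicate $\mathrm{rcv}(W,c)$ on terms is: true for $\lfloor ?d(x).P\rfloor Q$ iff $d=c$; $\mathrm{rcv}(P+Q,c)=\mathrm{rcv}(P,c)\vee\mathrm{rcv}(Q,c)$; $\mathrm{rcv}(\mathrm{fix}\,X.P,c)=\mathrm{rcv}(P,c)$; $\mathrm{rcv}(W_1|W_2,c)=\mathrm{rcv}(W_1,c)\vee\mathrm{rcv}(W_2,c)$; $\mathrm{rcv}(\nu d{:}(n,v).W,c)=\mathrm{rcv}(W,c)$ (with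 $d\neq c$ by $\alpha$-conversion); false for all other forms (broadcasts, $\tau.P$, $\sigma.P$, conditionals, $X$, $\mathbf 0$, active receivers). Then $\mathrm{rcv}(\Gamma\triangleright W,c)$ holds iff $c$ is idle in $\Gamma$ and $\mathrm{rcv}(W,c)$. Transitions $\Gamma\triangleright W\xrightarrow{\lambda}W'$ are the least relation closed under: (Snd) $[\![e]\!]=v$ implies $\Gamma\triangleright c!\langle e\rangle.P\xrightarrow{c!v}\sigma^{\delta_v}.P$; (Rcv) $c$ idle in $\Gamma$ implies $\Gamma\triangleright\lfloor ?c(x).P\rfloor Q\xrightarrow{c?v}\lfloor ?c(x).P\rfloor$; (RcvIgn) $\neg\mathrm{rcv}(\Gamma\triangleright W,c)$ implies $\Gamma\triangleright W\xrightarrow{c?v}W$; (Sync) $\Gamma\triangleright W_1\xrightarrow{c!v}W_1'$ and $\Gamma\triangleright W_2\xrightarrow{c?v}W_2'$ imply $\Gamma\triangleright W_1|W_2\xrightarrow{c!v}W_1'|W_2'$, and symmetrically; (RcvPar) $\Gamma\triangleright W_i\xrightarrow{c?v}W_i'$ for $i=1,2$ imply $\Gamma\triangleright W_1|W_2\xrightarrow{c?v}W_1'|W_2'$; (TimeNil) $\Gamma\triangleright\mathbf 0\xrightarrow{\sigma}\mathbf 0$; (Sleep) $\Gamma\triangleright\sigma.P\xrightarrow{\sigma}P$; (ActRcv) $\Gamma\vdash_t c:n$, $n>1$ imply $\Gamma\triangleright\lfloor ?c(x).P\rfloor\xrightarrow{\sigma}\lfloor ?c(x).P\rfloor$; (EndRcv)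 $\Gamma\vdash_t c:1$, $\Gamma\vdash_v c:w$ imply $\Gamma\triangleright\lfloor ?c(x).P\rfloor\xrightarrow{\sigma}\{w/x\}P$; (Timeout) $c$ idle in $\Gamma$ implies $\Gamma\triangleright\lfloor ?c(x).P\rfloor Q\xrightarrow{\sigma}Q$; (RcvLate) $c$ exposed in $\Gamma$ implies $\Gamma\triangleright\lfloor ?c(x).P\rfloor Q\xrightarrow{\tau}\lfloor ?c(x).\{\mathtt{err}/x\}P\rfloor$; (Tau) $\Gamma\triangleright\tau.P\xrightarrow{\tau}P$; (Then)/(Else) $\Gamma\triangleright[b]P,Q\xrightarrow{\tau}\sigma.P$ if $[\![b]\!]_\Gamma$ is true and $\xrightarrow{\tau}\sigma.Q$ otherwise, where $[\![e_1=e_2]\!]_\Gamma$ is true iff $[\![e_1]\!]=[\![e_2]\!]$ and $[\![\mathrm{exp}(c)]\!]_\Gamma$ is true iff $c$ is exposed in $\Gamma$; (TimePar) $\Gamma\triangleright W_i\xrightarrow{\sigma}W_i'$ for $i=1,2$ imply $\Gamma\triangleright W_1|W_2\xrightarrow{\sigma}W_1'|W_2'$; (TauPar) $\Gamma\triangleright W_1\xrightarrow{\tau}W_1'$ implies $\Gamma\triangleright W_1|W_2\xrightarrow{\tau}W_1'|W_2$, and symmetrically; (Rec) $\Gamma\triangleright\{\mathrm{fix}\,X.P/X\}P\xrightarrow{\lambda}W$ implies $\Gamma\triangleright\mathrm{fix}\,X.P\xrightarrow{\lambda}W$; (Sum) for $\lambda\in\{\tau,c!v\}$, $\Gamma\triangleright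 P\xrightarrow{\lambda}W$ implies $\Gamma\triangleright P+Q\xrightarrow{\lambda}W$, and symmetrically; (SumTime) $\Gamma\triangleright P\xrightarrow{\sigma}P'$, $\Gamma\triangleright Q\xrightarrow{\sigma}Q'$ imply $\Gamma\triangleright P+Q\xrightarrow{\sigma}P'+Q'$; (SumRcv) $\Gamma\triangleright P\xrightarrow{c?v}W$ and $\mathrm{rcv}(\Gamma\triangleright P,c)$ imply $\Gamma\triangleright P+Q\xrightarrow{c?v}W$, and symmetrically; (ResI) $\Gamma[c\mapsto(n,v)]\triangleright W\xrightarrow{c!w}W'$ implies $\Gamma\triangleright\nu c{:}(n,v).W\xrightarrow{\tau}\nu c{:}(c!w(\Gamma[c\mapsto(n,v)]))(c).W'$; (ResV) $\Gamma[c\mapsto(n,v)]\triangleright W\xrightarrow{\lambda}W'$ with $c$ not occurring in $\lambda$ implies $\Gamma\triangleright\nu c{:}(n,v).W\xrightarrow{\lambda}\nu c{:}(\lambda(\Gamma[c\mapsto(n,v)]))(c).W'$. *)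

theory Defs
  imports Main
begin

text \<open>Type parameters: 'c channels, 'v closed values, 'x data variables,
  'p process variables.  Expressions are built from closed values, data
  variables and arbitrary operations on values.\<close>

datatype ('v,'x) exp =
    EVal 'v
  | EVar 'x
  | EApp "'v list \<Rightarrow> 'v" "('v,'x) exp list"

datatype ('c,'v,'x) bexp =
    BEq "('v,'x) exp" "('v,'x) exp"
  | BExp 'c

datatype ('c,'v,'x,'p) proc =
    Snd 'c "('v,'x) exp" "('c,'v,'x,'p) proc"
  | Rcv 'c 'x "('c,'v,'x,'p) proc" "('c,'v,'x,'p) proc"
  | Sig "('c,'v,'x,'p) proc"
  | Tau "('c,'v,'x,'p) proc"
  | Sum "('c,'v,'x,'p) proc" "('c,'v,'x,'p) proc"
  | Cond "('c,'v,'x) bexp" "('c,'v,'x,'p) proc" "('c,'v,'x,'p) proc"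
  | PVar 'p
  | Nil
  | Fix 'p "('c,'v,'x,'p) proc"

datatype ('c,'v,'x,'p) sys =
    Proc "('c,'v,'x,'p) proc"
  | Active 'c 'x "('c,'v,'x,'p) proc"
  | Par "('c,'v,'x,'p) sys" "('c,'v,'x,'p) sys"
  | Res 'c nat 'v "('c,'v,'x,'p) sys"

datatype ('c,'v) act = AOut 'c 'v | AIn 'c 'v | ASig | ATau

type_synonym ('c,'v) env = "'c \<Rightarrow> nat \<times> 'v"

primrec fv_exp :: "('v,'x) exp \<Rightarrow> 'x set" where
  "fv_exp (EVal v) = {}"
| "fv_exp (EVar x) = {x}"
| "fv_exp (EApp f es) = \<Union> (set (map fv_exp es))"

primrec fv_bexp :: "('c,'v,'x) bexp \<Rightarrow> 'x set" where
  "fv_bexp (BEq e1 e2) = fv_exp e1 \<union> fv_exp e2"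
| "fv_bexp (BExp c) = {}"

primrec fv_proc :: "('c,'v,'x,'p) proc \<Rightarrow> 'x set" where
  "fv_proc (Snd c e P) = fv_exp e \<union> fv_proc P"
| "fv_proc (Rcv c x P Q) = (fv_proc P - {x}) \<union> fv_proc Q"
| "fv_proc (Sig P) = fv_proc P"
| "fv_proc (Tau P) = fv_proc P"
| "fv_proc (Sum P Q) = fv_proc P \<union> fv_proc Q"
| "fv_proc (Cond b P Q) = fv_bexp b \<union> fv_proc P \<union> fv_proc Q"
| "fv_proc (PVar X) = {}"
| "fv_proc Nil = {}"
| "fv_proc (Fix X P) = fv_proc P"

primrec fpv_proc :: "('c,'v,'x,'p) proc \<Rightarrow> 'p set" where
  "fpv_proc (Snd c e P) = fpv_proc P"
| "fpv_proc (Rcv c x P Q) = fpv_proc P \<union> fpv_proc Q"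
| "fpv_proc (Sig P) = fpv_proc P"
| "fpv_proc (Tau P) = fpv_proc P"
| "fpv_proc (Sum P Q) = fpv_proc P \<union> fpv_proc Q"
| "fpv_proc (Cond b P Q) = fpv_proc P \<union> fpv_proc Q"
| "fpv_proc (PVar X) = {X}"
| "fpv_proc Nil = {}"
| "fpv_proc (Fix X P) = fpv_proc P - {X}"

primrec fv_sys :: "('c,'v,'x,'p) sys \<Rightarrow> 'x set" where
  "fv_sys (Proc P) = fv_proc P"
| "fv_sys (Active c x P) = fv_proc P - {x}"
| "fv_sys (Par W1 W2) = fv_sys W1 \<union> fv_sys W2"
| "fv_sys (Res c n v W) = fv_sys W"

primrec fpv_sys :: "('c,'v,'x,'p) sys \<Rightarrow> 'p set" where
  "fpv_sys (Proc P) = fpv_proc P"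
| "fpv_sys (Active c x P) = fpv_proc P"
| "fpv_sys (Par W1 W2) = fpv_sys W1 \<union> fpv_sys W2"
| "fpv_sys (Res c n v W) = fpv_sys W"

primrec unguarded :: "'p \<Rightarrow> ('c,'v,'x,'p) proc \<Rightarrow> bool" where
  "unguarded X (Snd c e P) = False"
| "unguarded X (Rcv c x P Q) = False"
| "unguarded X (Sig P) = False"
| "unguarded X (Tau P) = unguarded X P"
| "unguarded X (Sum P Q) = (unguarded X P \<or> unguarded X Q)"
| "unguarded X (Cond b P Q) = False"
| "unguarded X (PVar Y) = (X = Y)"
| "unguarded X Nil = False"
| "unguarded X (Fix Y P) = (X \<noteq> Y \<and> unguarded X P)"

primrec guarded_proc :: "('c,'v,'x,'p) proc \<Rightarrow> bool" where
  "guarded_proc (Snd c e P) = guarded_proc P"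
| "guarded_proc (Rcv c x P Q) = (guarded_proc P \<and> guarded_proc Q)"
| "guarded_proc (Sig P) = guarded_proc P"
| "guarded_proc (Tau P) = guarded_proc P"
| "guarded_proc (Sum P Q) = (guarded_proc P \<and> guarded_proc Q)"
| "guarded_proc (Cond b P Q) = (guarded_proc P \<and> guarded_proc Q)"
| "guarded_proc (PVar X) = True"
| "guarded_proc Nil = True"
| "guarded_proc (Fix X P) = (\<not> unguarded X P \<and> guarded_proc P)"

primrec guarded_sys :: "('c,'v,'x,'p) sys \<Rightarrow> bool" where
  "guarded_sys (Proc P) = guarded_proc P"
| "guarded_sys (Active c x P) = guarded_proc P"
| "guarded_sys (Par W1 W2) = (guarded_sys W1 \<and> guarded_sys W2)"
| "guarded_sys (Res c n v W) = guarded_sys W"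

definition configuration :: "('c,'v) env \<Rightarrow> ('c,'v,'x,'p) sys \<Rightarrow> bool" where
  "configuration \<Gamma> W \<longleftrightarrow> fv_sys W = {} \<and> fpv_sys W = {} \<and> guarded_sys W"

primrec subst_exp :: "'v \<Rightarrow> 'x \<Rightarrow> ('v,'x) exp \<Rightarrow> ('v,'x) exp" where
  "subst_exp w x (EVal v) = EVal v"
| "subst_exp w x (EVar y) = (if y = x then EVal w else EVar y)"
| "subst_exp w x (EApp f es) = EApp f (map (subst_exp w x) es)"

primrec subst_bexp :: "'v \<Rightarrow> 'x \<Rightarrow> ('c,'v,'x) bexp \<Rightarrow> ('c,'v,'x) bexp" where
  "subst_bexp w x (BEq e1 e2) = BEq (subst_exp w x e1) (subst_exp w x e2)"
| "subst_bexp w x (BExp c) = BExp c"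

text \<open>{w/x}P for a closed value w (no capture can occur).\<close>
primrec subst_proc :: "'v \<Rightarrow> 'x \<Rightarrow> ('c,'v,'x,'p) proc \<Rightarrow> ('c,'v,'x,'p) proc" where
  "subst_proc w x (Snd c e P) = Snd c (subst_exp w x e) (subst_proc w x P)"
| "subst_proc w x (Rcv c y P Q) =
     Rcv c y (if y = x then P else subst_proc w x P) (subst_proc w x Q)"
| "subst_proc w x (Sig P) = Sig (subst_proc w x P)"
| "subst_proc w x (Tau P) = Tau (subst_proc w x P)"
| "subst_proc w x (Sum P Q) = Sum (subst_proc w x P) (subst_proc w x Q)"
| "subst_proc w x (Cond b P Q) = Cond (subst_bexp w x b) (subst_proc w x P) (subst_proc w x Q)"
| "subst_proc w x (PVar X) = PVar X"
| "subst_proc w x Nil = Nil"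
| "subst_proc w x (Fix X P) = Fix X (subst_proc w x P)"

text \<open>{R/X}P; used only with R closed, so no capture can occur.\<close>
primrec psubst :: "('c,'v,'x,'p) proc \<Rightarrow> 'p \<Rightarrow> ('c,'v,'x,'p) proc \<Rightarrow> ('c,'v,'x,'p) proc" where
  "psubst R X (Snd c e P) = Snd c e (psubst R X P)"
| "psubst R X (Rcv c y P Q) = Rcv c y (psubst R X P) (psubst R X Q)"
| "psubst R X (Sig P) = Sig (psubst R X P)"
| "psubst R X (Tau P) = Tau (psubst R X P)"
| "psubst R X (Sum P Q) = Sum (psubst R X P) (psubst R X Q)"
| "psubst R X (Cond b P Q) = Cond b (psubst R X P) (psubst R X Q)"
| "psubst R X (PVar Y) = (if Y = X then R else PVar Y)"
| "psubst R X Nil = Nil"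
| "psubst R X (Fix Y P) = Fix Y (if Y = X then P else psubst R X P)"

text \<open>Evaluation [[e]] of closed expressions (the variable case never arises).\<close>
primrec eval :: "('v,'x) exp \<Rightarrow> 'v" where
  "eval (EVal v) = v"
| "eval (EVar x) = undefined"
| "eval (EApp f es) = f (map eval es)"

definition idle :: "('c,'v) env \<Rightarrow> 'c \<Rightarrow> bool" where
  "idle \<Gamma> c \<longleftrightarrow> fst (\<Gamma> c) = 0"

definition exposed :: "('c,'v) env \<Rightarrow> 'c \<Rightarrow> bool" where
  "exposed \<Gamma> c \<longleftrightarrow> \<not> idle \<Gamma> c"

primrec beval :: "('c,'v) env \<Rightarrow> ('c,'v,'x) bexp \<Rightarrow> bool" where
  "beval \<Gamma> (BEq e1 e2) = (eval e1 = eval e2)"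
| "beval \<Gamma> (BExp c) = exposed \<Gamma> c"

definition sigma_pow :: "nat \<Rightarrow> ('c,'v,'x,'p) proc \<Rightarrow> ('c,'v,'x,'p) proc" where
  "sigma_pow n P = (Sig ^^ n) P"

fun upd :: "'v \<Rightarrow> ('v \<Rightarrow> nat) \<Rightarrow> ('c,'v) act \<Rightarrow> ('c,'v) env \<Rightarrow> ('c,'v) env" where
  "upd err \<delta> ASig \<Gamma> = (\<lambda>c. (fst (\<Gamma> c) - 1, snd (\<Gamma> c)))"
| "upd err \<delta> (AOut c v) \<Gamma> =
     \<Gamma>(c := (if idle \<Gamma> c then (\<delta> v, v) else (max (\<delta> v) (fst (\<Gamma> c)), err)))"
| "upd err \<delta> (AIn c v) \<Gamma> =
     \<Gamma>(c := (if idle \<Gamma> c then (\<delta> v, v) else (max (\<delta> v) (fst (\<Gamma> c)), err)))"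
| "upd err \<delta> ATau \<Gamma> = \<Gamma>"

fun act_chan :: "('c,'v) act \<Rightarrow> 'c option" where
  "act_chan (AOut c v) = Some c"
| "act_chan (AIn c v) = Some c"
| "act_chan ASig = None"
| "act_chan ATau = None"

primrec rcv_proc :: "('c,'v,'x,'p) proc \<Rightarrow> 'c \<Rightarrow> bool" where
  "rcv_proc (Snd d e P) c = False"
| "rcv_proc (Rcv d x P Q) c = (d = c)"
| "rcv_proc (Sig P) c = False"
| "rcv_proc (Tau P) c = False"
| "rcv_proc (Sum P Q) c = (rcv_proc P c \<or> rcv_proc Q c)"
| "rcv_proc (Cond b P Q) c = False"
| "rcv_proc (PVar X) c = False"
| "rcv_proc Nil c = False"
| "rcv_proc (Fix X P) c = rcv_proc P c"

text \<open>For nu d with d = c the bound name is renamed away (alpha-conversion),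
  so the restricted term contains no receiver on c.\<close>
primrec rcv_sys :: "('c,'v,'x,'p) sys \<Rightarrow> 'c \<Rightarrow> bool" where
  "rcv_sys (Proc P) c = rcv_proc P c"
| "rcv_sys (Active d x P) c = False"
| "rcv_sys (Par W1 W2) c = (rcv_sys W1 c \<or> rcv_sys W2 c)"
| "rcv_sys (Res d n v W) c = (d \<noteq> c \<and> rcv_sys W c)"

definition rcv_conf :: "('c,'v) env \<Rightarrow> ('c,'v,'x,'p) sys \<Rightarrow> 'c \<Rightarrow> bool" where
  "rcv_conf \<Gamma> W c \<longleftrightarrow> idle \<Gamma> c \<and> rcv_sys W c"

inductive trans :: "'v \<Rightarrow> ('v \<Rightarrow> nat) \<Rightarrow> ('c,'v) env \<Rightarrow> ('c,'v,'x,'p) sys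
                     \<Rightarrow> ('c,'v) act \<Rightarrow> ('c,'v,'x,'p) sys \<Rightarrow> bool"
  for err :: 'v and \<delta> :: "'v \<Rightarrow> nat" where
  Snd: "eval e = v \<Longrightarrow> trans err \<delta> \<Gamma> (Proc (Snd c e P)) (AOut c v) (Proc (sigma_pow (\<delta> v) P))"
| Rcv: "idle \<Gamma> c \<Longrightarrow> trans err \<delta> \<Gamma> (Proc (Rcv c x P Q)) (AIn c v) (Active c x P)"
| RcvIgn: "\<not> rcv_conf \<Gamma> W c \<Longrightarrow> trans err \<delta> \<Gamma> W (AIn c v) W"
| Sync1: "trans err \<delta> \<Gamma> W1 (AOut c v) W1' \<Longrightarrow> trans err \<delta> \<Gamma> W2 (AIn c v) W2' \<Longrightarrow>
          trans err \<delta> \<Gamma> (Par W1 W2) (AOut c v) (Par W1' W2')"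
| Sync2: "trans err \<delta> \<Gamma> W1 (AIn c v) W1' \<Longrightarrow> trans err \<delta> \<Gamma> W2 (AOut c v) W2' \<Longrightarrow>
          trans err \<delta> \<Gamma> (Par W1 W2) (AOut c v) (Par W1' W2')"
| RcvPar: "trans err \<delta> \<Gamma> W1 (AIn c v) W1' \<Longrightarrow> trans err \<delta> \<Gamma> W2 (AIn c v) W2' \<Longrightarrow>
          trans err \<delta> \<Gamma> (Par W1 W2) (AIn c v) (Par W1' W2')"
| TimeNil: "trans err \<delta> \<Gamma> (Proc Nil) ASig (Proc Nil)"
| Sleep: "trans err \<delta> \<Gamma> (Proc (Sig P)) ASig (Proc P)"
| ActRcv: "fst (\<Gamma> c) > 1 \<Longrightarrow> trans err \<delta> \<Gamma> (Active c x P) ASig (Active c x P)"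
| EndRcv: "fst (\<Gamma> c) = 1 \<Longrightarrow> snd (\<Gamma> c) = w \<Longrightarrow>
          trans err \<delta> \<Gamma> (Active c x P) ASig (Proc (subst_proc w x P))"
| Timeout: "idle \<Gamma> c \<Longrightarrow> trans err \<delta> \<Gamma> (Proc (Rcv c x P Q)) ASig (Proc Q)"
| RcvLate: "exposed \<Gamma> c \<Longrightarrow>
          trans err \<delta> \<Gamma> (Proc (Rcv c x P Q)) ATau (Active c x (subst_proc err x P))"
| TauR: "trans err \<delta> \<Gamma> (Proc (Tau P)) ATau (Proc P)"
| Then: "beval \<Gamma> b \<Longrightarrow> trans err \<delta> \<Gamma> (Proc (Cond b P Q)) ATau (Proc (Sig P))"
| Else: "\<not> beval \<Gamma> b \<Longrightarrow> trans err \<delta> \<Gamma> (Proc (Cond b P Q)) ATau (Proc (Sig Q))"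
| TimePar: "trans err \<delta> \<Gamma> W1 ASig W1' \<Longrightarrow> trans err \<delta> \<Gamma> W2 ASig W2' \<Longrightarrow>
          trans err \<delta> \<Gamma> (Par W1 W2) ASig (Par W1' W2')"
| TauPar1: "trans err \<delta> \<Gamma> W1 ATau W1' \<Longrightarrow> trans err \<delta> \<Gamma> (Par W1 W2) ATau (Par W1' W2)"
| TauPar2: "trans err \<delta> \<Gamma> W2 ATau W2' \<Longrightarrow> trans err \<delta> \<Gamma> (Par W1 W2) ATau (Par W1 W2')"
| Rec: "trans err \<delta> \<Gamma> (Proc (psubst (Fix X P) X P)) a W \<Longrightarrow>
          trans err \<delta> \<Gamma> (Proc (Fix X P)) a W"
| Sum1: "(a = ATau \<or> (\<exists>c v. a = AOut c v)) \<Longrightarrow> trans err \<delta> \<Gamma> (Proc P) a W \<Longrightarrow>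
          trans err \<delta> \<Gamma> (Proc (Sum P Q)) a W"
| Sum2: "(a = ATau \<or> (\<exists>c v. a = AOut c v)) \<Longrightarrow> trans err \<delta> \<Gamma> (Proc Q) a W \<Longrightarrow>
          trans err \<delta> \<Gamma> (Proc (Sum P Q)) a W"
| SumTime: "trans err \<delta> \<Gamma> (Proc P) ASig (Proc P') \<Longrightarrow> trans err \<delta> \<Gamma> (Proc Q) ASig (Proc Q') \<Longrightarrow>
          trans err \<delta> \<Gamma> (Proc (Sum P Q)) ASig (Proc (Sum P' Q'))"
| SumRcv1: "trans err \<delta> \<Gamma> (Proc P) (AIn c v) W \<Longrightarrow> rcv_conf \<Gamma> (Proc P) c \<Longrightarrow>
          trans err \<delta> \<Gamma> (Proc (Sum P Q)) (AIn c v) W"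
| SumRcv2: "trans err \<delta> \<Gamma> (Proc Q) (AIn c v) W \<Longrightarrow> rcv_conf \<Gamma> (Proc Q) c \<Longrightarrow>
          trans err \<delta> \<Gamma> (Proc (Sum P Q)) (AIn c v) W"
| ResI: "trans err \<delta> (\<Gamma>(c := (n, v))) W (AOut c w) W' \<Longrightarrow>
          trans err \<delta> \<Gamma> (Res c n v W) ATau
            (Res c (fst (upd err \<delta> (AOut c w) (\<Gamma>(c := (n, v))) c))
                   (snd (upd err \<delta> (AOut c w) (\<Gamma>(c := (n, v))) c)) W')"
| ResV: "trans err \<delta> (\<Gamma>(c := (n, v))) W a W' \<Longrightarrow> act_chan a \<noteq> Some c \<Longrightarrow>
          trans err \<delta> \<Gamma> (Res c n v W) a
            (Res c (fst (upd err \<delta> a (\<Gamma>(c := (n, v))) c))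
                   (snd (upd err \<delta> a (\<Gamma>(c := (n, v))) c)) W')"
| ResShadow: "trans err \<delta> \<Gamma> (Res c n v W) (AIn c w) (Res c n v W)"
  \<comment> \<open>ResV applied to the alpha-renamed term nu c':(n,v).W[c'/c]: the input on
      the now-absent name c is ignored and the local state is unchanged.\<close>

end

theory Submission
  imports Defs
begin

text \<open>
  The rules that can derive a sigma-step are syntax-directed: for each shape
  of system term at most one rule concludes a sigma-transition (the choice
  between ActRcv and EndRcv, and between Timeout and the other rules, is fixed
  by the environment, which does not change during the step), and the
  premises of compound rules (TimePar, SumTime, Rec, ResV) are again
  sigma-steps in a uniquely determined environment.
\<close>

inductive_cases time_ParE: "trans err \<delta> \<Gamma> (Par W1 W2) ASig W"
inductive_cases time_SumE: "trans err \<delta> \<Gamma> (Proc (Sum P Q)) ASig W"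
inductive_cases time_FixE: "trans err \<delta> \<Gamma> (Proc (Fix X P)) ASig W"
inductive_cases time_ResE: "trans err \<delta> \<Gamma> (Res c n v W) ASig W'"

inductive_cases time_NilE: "trans err \<delta> \<Gamma> (Proc Nil) ASig W"
inductive_cases time_SigE: "trans err \<delta> \<Gamma> (Proc (Sig P)) ASig W"
inductive_cases time_RcvE: "trans err \<delta> \<Gamma> (Proc (Rcv c x P Q)) ASig W"
inductive_cases time_ActiveE: "trans err \<delta> \<Gamma> (Active c x P) ASig W"

lemma time_deterministic:
  fixes \<Gamma> :: "('c,'v) env" and W W1 W2 :: "('c,'v,'x,'p) sys"
  assumes "trans err \<delta> \<Gamma> W ASig W1" and "trans err \<delta> \<Gamma> W ASig W2"
  shows "W1 = W2"
  using assms
proof (induction \<Gamma> W "ASig :: ('c,'v) act" W1 arbitrary: W2 rule: trans.induct)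
  case (TimePar \<Gamma> V1 V1' V2 V2')
  from TimePar.prems show ?case
    by (rule time_ParE) (auto dest: TimePar.hyps(2,4))
next
  case (SumTime \<Gamma> P P' Q Q')
  from SumTime.prems show ?case
  proof (rule time_SumE)
    fix A B
    assume "W2 = Proc (Sum A B)"
      and "trans err \<delta> \<Gamma> (Proc P) ASig (Proc A)"
      and "trans err \<delta> \<Gamma> (Proc Q) ASig (Proc B)"
    with SumTime.hyps(2,4) show ?case by fastforce
  qed
next
  case (Rec \<Gamma> X P W)
  from Rec.prems show ?case
    by (rule time_FixE) (auto dest: Rec.hyps(2))
next
  case (ResV \<Gamma> c n v W W')
  from ResV.prems show ?case
    by (rule time_ResE) (auto dest: ResV.hyps(2))
next
  case (ActRcv \<Gamma> c x P)
  from ActRcv.prems show ?case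
    by (rule time_ActiveE) (use ActRcv.hyps in simp_all)
next
  case (EndRcv \<Gamma> c w x P)
  from EndRcv.prems show ?case
    by (rule time_ActiveE) (use EndRcv.hyps in simp_all)
next
  case (Timeout \<Gamma> c x P Q)
  from Timeout.prems show ?case
    by (rule time_RcvE) simp
next
  case (Sleep \<Gamma> P)
  from Sleep.prems show ?case
    by (rule time_SigE) simp
next
  case (TimeNil \<Gamma>)
  from TimeNil.prems show ?case
    by (rule time_NilE) simp
next
  case (Sum1 \<Gamma> P W Q)
  \<comment> \<open>choice resolves only on tau and output actions, never on sigma\<close>
  from Sum1.hyps(1) show ?case by simp
next
  case (Sum2 \<Gamma> Q W P)
  from Sum2.hyps(1) show ?case by simp
qed

theorem mainTheorem2:
  fixes err :: 'v and \<delta> :: "'v \<Rightarrow> nat"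
    and \<Gamma> :: "('c,'v) env" and W W1 W2 :: "('c,'v,'x,'p) sys"
  assumes "\<forall>v. \<delta> v \<ge> 1"
    and "configuration \<Gamma> W"
    and "trans err \<delta> \<Gamma> W ASig W1"
    and "trans err \<delta> \<Gamma> W ASig W2"
  shows "W1 = W2"
  using assms(3,4) by (rule time_deterministic)

end
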